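(* Let $\mathcal{C}$ be a clone on a finite set $A=\{1,\dots,t\}$ and let $(c,d)\in A^2$. Then $\lambda(\mathcal{C},(c,d))$ is an upward closed subset of $(A^+,\le_{\mathrm{E}})$, i.e. if $\mathbf{a}\in\lambda(\mathcal{C},(c,d))$ and $\mathbf{a}\le_{\mathrm{E}}\mathbf{b}$ then $\mathbf{b}\in\lambda(\mathcal{C},(c,d))$.
   Context: A clone on $A$ is a set of finitary operations on $A$ closed under composition and containing all projections; $\mathcal{C}^{[n]}$ is its set of $n$-ary members. $A^+=\bigcup_{n\ge1}A^n$. $<_{\mathrm{lex}}$ is the strict lexicographic order on $A^n$ induced by $1<\dots<t$. For $\mathbf{a}\in A^n$, $\varphi(\mathcal{C},\mathbf{a}):=\{(f(\mathbf{a}),g(\mathbf{a})) : f,g\in\mathcal{C}^{[n]},\ f(\mathbf{c})=g(\mathbf{c})\text{ for all }\mathbf{c}<_{\mathrm{lex}}\mathbf{a}\}$, and $\lambda(\mathcal{C},(c,d)):=\{\mathbf{a}\in A^+ : (c,d)\notin\varphi(\mathcal{C},\mathbf{a})\}$. $\mathrm{firstOcc}(\mathbf{a},b)$ is $0$ if $b$ does not occur in $\mathbf{a}$, otherwise the least $i$ with $a_i=b$; $(a_1,\dots,a_m)\le_{\mathrm{E}}(b_1,\dots,b_n)$ means there is a strictly increasing $h:\{1,\dots,m\}\to\{1,\dots,n\}$ with $a_i=b_{h(i)}$ for all $i$, $\{a_1,\dots,a_m\}=\{b_1,\dots,b_n\}$, and $h(\mathrm{firstOcc}(\mathbf{a},c))=\mathrm{firstOcc}(\mathbf{b},c)$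 for all $c\in\{a_1,\dots,a_m\}$. *)

theory Defs
  imports Main
begin

text \<open>The finite set A = {1..t}; tuples are lists (position i of the paper = index i-1).\<close>

definition tuples :: "nat \<Rightarrow> nat \<Rightarrow> nat list set" where
  "tuples t n = {xs. length xs = n \<and> set xs \<subseteq> {1..t}}"

definition Aplus :: "nat \<Rightarrow> nat list set" where
  "Aplus t = {xs. xs \<noteq> [] \<and> set xs \<subseteq> {1..t}}"

definition is_op :: "nat \<Rightarrow> nat \<Rightarrow> (nat list \<Rightarrow> nat) \<Rightarrow> bool" where
  "is_op t n f \<longleftrightarrow> (\<forall>xs\<in>tuples t n. f xs \<in> {1..t}) \<and>
                      (\<forall>xs. xs \<notin> tuples t n \<longrightarrow> f xs = undefined)"

definition is_clone :: "nat \<Rightarrow> (nat \<Rightarrow> (nat list \<Rightarrow> nat) set) \<Rightarrow> bool" where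
  "is_clone t C \<longleftrightarrow>
     (\<forall>n. C n \<subseteq> {f. is_op t n f}) \<and> C 0 = {} \<and>
     (\<forall>n i. 1 \<le> n \<longrightarrow> i < n \<longrightarrow>
        (\<lambda>xs. if xs \<in> tuples t n then xs ! i else undefined) \<in> C n) \<and>
     (\<forall>m n f gs. 1 \<le> n \<longrightarrow> f \<in> C m \<longrightarrow> length gs = m \<longrightarrow> set gs \<subseteq> C n \<longrightarrow>
        (\<lambda>xs. if xs \<in> tuples t n then f (map (\<lambda>g. g xs) gs) else undefined) \<in> C n)"

definition lex_less :: "nat list \<Rightarrow> nat list \<Rightarrow> bool" where
  "lex_less c a \<longleftrightarrow> length c = length a \<and>
     (\<exists>i<length a. take i c = take i a \<and> c ! i < a ! i)"

definition phi :: "nat \<Rightarrow> (nat \<Rightarrow> (nat list \<Rightarrow> nat) set) \<Rightarrow> nat list \<Rightarrow> (nat \<times> nat) set" where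
  "phi t C a = {(f a, g a) | f g. f \<in> C (length a) \<and> g \<in> C (length a) \<and>
       (\<forall>c\<in>tuples t (length a). lex_less c a \<longrightarrow> f c = g c)}"

definition lam :: "nat \<Rightarrow> (nat \<Rightarrow> (nat list \<Rightarrow> nat) set) \<Rightarrow> nat \<times> nat \<Rightarrow> nat list set" where
  "lam t C cd = {a \<in> Aplus t. cd \<notin> phi t C a}"

text \<open>1-based first occurrence, 0 if absent.\<close>
definition firstOcc :: "nat list \<Rightarrow> nat \<Rightarrow> nat" where
  "firstOcc a b = (if b \<in> set a then Suc (LEAST i. i < length a \<and> a ! i = b) else 0)"

definition E_le :: "nat list \<Rightarrow> nat list \<Rightarrow> bool" where
  "E_le a b \<longleftrightarrow> (\<exists>h :: nat \<Rightarrow> nat.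
      strict_mono_on {1..length a} h \<and> h ` {1..length a} \<subseteq> {1..length b} \<and>
      (\<forall>i\<in>{1..length a}. a ! (i - 1) = b ! (h i - 1)) \<and>
      set a = set b \<and>
      (\<forall>c\<in>set a. h (firstOcc a c) = firstOcc b c))"

end

theory Submission
  imports Defs
begin

(* If a \<le>E b then b is obtained from a by a "lex retraction":
   a map s from positions of b to positions of a with b = a \<circ> s such that every
   position k of a is hit by some position j of b with s i < k for all i < j.
   Such an s is built from the embedding h witnessing a \<le>E b: s j is the largest
   position k of a carrying the value b_j whose image under h lies at or before j;
   the first-occurrence condition of \<le>E guarantees that such a k exists.
   Reindexing tuples along s sends a to b and lexicographic predecessors of a to
   lexicographic predecessors of b.  Since a clone is closed under minors
   f \<mapsto> f(x_{s 1},...,x_{s n}), every pair of operations witnessing (c,d) \<in> phi(C,b)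
   yields a pair witnessing (c,d) \<in> phi(C,a).  Hence phi(C,b) \<subseteq> phi(C,a), and
   (c,d) \<notin> phi(C,a) implies (c,d) \<notin> phi(C,b), i.e. lambda(C,(c,d)) is upward closed. *)

definition reindex :: "(nat \<Rightarrow> nat) \<Rightarrow> nat \<Rightarrow> nat list \<Rightarrow> nat list" where
  "reindex s n x = map (\<lambda>j. x ! s j) [0..<n]"

definition lex_retraction :: "nat list \<Rightarrow> nat list \<Rightarrow> (nat \<Rightarrow> nat) \<Rightarrow> bool" where
  "lex_retraction a b s \<longleftrightarrow>
     (\<forall>j<length b. s j < length a \<and> b ! j = a ! s j) \<and>
     (\<forall>k<length a. \<exists>j<length b. s j = k \<and> (\<forall>i<j. s i < k))"

text \<open>The embedding of a \<le>E b in 0-based form.  The first-occurrence condition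
  becomes a covering property: each entry of b already occurs in a at a position
  whose image does not lie after it.\<close>
lemma E_le_embedding:
  assumes "E_le a b"
  obtains g where "\<forall>k<length a. g k < length b \<and> b ! g k = a ! k"
    and "\<forall>k k'. k < k' \<longrightarrow> k' < length a \<longrightarrow> g k < g k'"
    and "\<forall>j<length b. \<exists>k<length a. g k \<le> j \<and> a ! k = b ! j"
proof -
  from assms obtain h where mono: "strict_mono_on {1..length a} h"
    and h_maps: "h ` {1..length a} \<subseteq> {1..length b}"
    and entries: "\<forall>i\<in>{1..length a}. a ! (i - 1) = b ! (h i - 1)"
    and same_set: "set a = set b"
    and first_occ: "\<forall>c\<in>set a. h (firstOcc a c) = firstOcc b c"
    unfolding E_le_def by blast
  define g where "g k = h (Suc k) - 1" for k
  have h_range: "1 \<le> h (Suc k) \<and> h (Suc k) \<le> length b" if "k < length a" for k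
    using h_maps that by force
  have "g k < length b \<and> b ! g k = a ! k" if "k < length a" for k
  proof -
    have "a ! k = b ! (h (Suc k) - 1)"
      using entries that by (metis atLeastAtMost_iff diff_Suc_1 le_add1 plus_1_eq_Suc less_eq_Suc_le)
    moreover have "h (Suc k) - 1 < length b" using h_range[OF that] by linarith
    ultimately show ?thesis unfolding g_def by simp
  qed
  moreover have "g k < g k'" if "k < k'" "k' < length a" for k k'
  proof -
    have "h (Suc k) < h (Suc k')"
      using mono that unfolding strict_mono_on_def by simp
    then show ?thesis using h_range[of k] that unfolding g_def by linarith
  qed
  moreover have "\<exists>k<length a. g k \<le> j \<and> a ! k = b ! j" if j: "j < length b" for j
  proof -
    define v where "v = b ! j"
    have v_in: "v \<in> set a" using same_set j unfolding v_def by simp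
    define k where "k = (LEAST i. i < length a \<and> a ! i = v)"
    have k: "k < length a \<and> a ! k = v"
      using v_in unfolding k_def in_set_conv_nth by (metis (mono_tags, lifting) LeastI)
    have "(LEAST l. l < length b \<and> b ! l = v) \<le> j"
      using j unfolding v_def by (intro Least_le) simp
    then have "firstOcc b v \<le> Suc j"
      using v_in same_set unfolding firstOcc_def by simp
    moreover have "firstOcc a v = Suc k"
      using v_in unfolding firstOcc_def k_def by simp
    ultimately have "g k \<le> j" using first_occ v_in unfolding g_def by fastforce
    then show ?thesis using k unfolding v_def by blast
  qed
  ultimately show ?thesis using that by blast
qed

text \<open>Every \<le>E-relation is realised by a lex retraction: send j to the largest position
  of a carrying the value b_j whose image under the embedding is at or before j.\<close>
lemma E_le_lex_retraction:
  assumes "E_le a b"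
  shows "\<exists>s. lex_retraction a b s"
proof -
  obtain g where emb: "\<forall>k<length a. g k < length b \<and> b ! g k = a ! k"
    and mono: "\<forall>k k'. k < k' \<longrightarrow> k' < length a \<longrightarrow> g k < g k'"
    and cover: "\<forall>j<length b. \<exists>k<length a. g k \<le> j \<and> a ! k = b ! j"
    using E_le_embedding[OF assms] by blast
  define P where "P j k \<longleftrightarrow> k < length a \<and> g k \<le> j \<and> a ! k = b ! j" for j k
  define s where "s j = (GREATEST k. P j k)" for j
  have bounded: "k \<le> length a" if "P j k" for j k
    using that unfolding P_def by simp
  have s_P: "P j (s j)" if j: "j < length b" for j
  proof -
    obtain k where "P j k" using cover j unfolding P_def by blast
    then show ?thesis unfolding s_def using bounded by (rule GreatestI_nat)
  qed
  have s_max: "k \<le> s j" if "P j k" for j k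
    using that bounded unfolding s_def by (rule Greatest_le_nat)
  have g_le_mono: "k \<le> k'" if "g k \<le> g k'" "k < length a" "k' < length a" for k k'
  proof (rule ccontr)
    assume "\<not> k \<le> k'"
    then have "g k' < g k" using mono that(2) by simp
    then show False using that(1) by simp
  qed
  have s_hits: "s (g k) = k" if k: "k < length a" for k
  proof -
    have "P (g k) k" using emb k unfolding P_def by simp
    then have "k \<le> s (g k)" by (rule s_max)
    moreover have "P (g k) (s (g k))" using emb k s_P by simp
    then have "s (g k) \<le> k" using g_le_mono k unfolding P_def by blast
    ultimately show ?thesis by simp
  qed
  have s_below: "s i < k" if "i < g k" "k < length a" "i < length b" for i k
  proof -
    have "g (s i) \<le> i" "s i < length a" using s_P[OF that(3)] unfolding P_def by auto
    moreover have "g k \<le> g (s i)" if "k \<le> s i"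
      using mono \<open>s i < length a\<close> that by (cases "k = s i") (auto simp: le_less)
    ultimately show ?thesis using \<open>i < g k\<close> by (meson leD leI le_less_trans)
  qed
  have "\<forall>j<length b. s j < length a \<and> b ! j = a ! s j"
    using s_P unfolding P_def by simp
  moreover have "\<exists>j<length b. s j = k \<and> (\<forall>i<j. s i < k)" if k: "k < length a" for k
    using emb k s_hits s_below by (intro exI[of _ "g k"]) auto
  ultimately have "lex_retraction a b s"
    unfolding lex_retraction_def by blast
  then show ?thesis by blast
qed

lemma reindex_in_tuples:
  assumes "x \<in> tuples t m" and "\<forall>j<n. s j < m"
  shows "reindex s n x \<in> tuples t n"
  using assms unfolding tuples_def reindex_def by (auto dest!: nth_mem)

text \<open>Reindexing along a lex retraction maps a to b \<dots>\<close>
lemma reindex_lex_retraction: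
  assumes "lex_retraction a b s"
  shows "reindex s (length b) a = b"
  using assms unfolding lex_retraction_def reindex_def by (intro nth_equalityI) auto

text \<open>\<dots> and lexicographic predecessors of a to lexicographic predecessors of b:
  if x first drops below a at position k, its reindexing first drops below b at
  the position j that hits k with all earlier positions sent below k.\<close>
lemma lex_less_reindex:
  assumes s: "lex_retraction a b s" and x: "lex_less x a"
  shows "lex_less (reindex s (length b) x) b"
proof -
  from x obtain k where k: "k < length a" "take k x = take k a" "x ! k < a ! k"
    unfolding lex_less_def by auto
  from s k(1) obtain j where j: "j < length b" "s j = k" "\<forall>i<j. s i < k"
    unfolding lex_retraction_def by blast
  have "take j (reindex s (length b) x) = take j b"
  proof (rule nth_equalityI)
    fix i assume "i < length (take j (reindex s (length b) x))"
    then have i: "i < j" using j(1) unfolding reindex_def by simp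
    have "x ! s i = a ! s i" using k(2) j(3) i by (metis nth_take)
    then show "take j (reindex s (length b) x) ! i = take j b ! i"
      using s i j(1) unfolding lex_retraction_def reindex_def by simp
  qed (simp add: reindex_def j(1))
  moreover have "reindex s (length b) x ! j < b ! j"
    using s j k(3) unfolding lex_retraction_def reindex_def by simp
  ultimately show ?thesis
    using j(1) unfolding lex_less_def reindex_def by auto
qed

lemma clone_minor_closed:
  assumes clone: "is_clone t C" and f: "f \<in> C n" and m: "1 \<le> m" and s: "\<forall>j<n. s j < m"
  shows "(\<lambda>x. if x \<in> tuples t m then f (reindex s n x) else undefined) \<in> C m"
proof -
  define proj where "proj i = (\<lambda>x. if x \<in> tuples t m then x ! i else undefined)" for i
  define gs where "gs = map (\<lambda>j. proj (s j)) [0..<n]"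
  have "proj i \<in> C m" if "i < m" for i
    using clone m that unfolding is_clone_def proj_def by blast
  then have "set gs \<subseteq> C m" using s unfolding gs_def by auto
  moreover have "length gs = n" unfolding gs_def by simp
  ultimately have composed:
    "(\<lambda>x. if x \<in> tuples t m then f (map (\<lambda>g. g x) gs) else undefined) \<in> C m"
    using clone m f unfolding is_clone_def by blast
  have "map (\<lambda>g. g x) gs = reindex s n x" if "x \<in> tuples t m" for x
    using that unfolding gs_def proj_def reindex_def by simp
  then have "(\<lambda>x. if x \<in> tuples t m then f (map (\<lambda>g. g x) gs) else undefined)
      = (\<lambda>x. if x \<in> tuples t m then f (reindex s n x) else undefined)"
    by auto
  then show ?thesis using composed by simp
qed

lemma phi_lex_retraction_subset:
  assumes clone: "is_clone t C" and a: "a \<in> Aplus t" and s: "lex_retraction a b s"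
  shows "phi t C b \<subseteq> phi t C a"
proof
  fix p assume "p \<in> phi t C b"
  then obtain f g where fg: "f \<in> C (length b)" "g \<in> C (length b)" "p = (f b, g b)"
    and agree: "\<forall>y\<in>tuples t (length b). lex_less y b \<longrightarrow> f y = g y"
    unfolding phi_def by blast
  let ?m = "length a" and ?n = "length b"
  define minor :: "(nat list \<Rightarrow> nat) \<Rightarrow> nat list \<Rightarrow> nat" where
    "minor h = (\<lambda>x. if x \<in> tuples t ?m then h (reindex s ?n x) else undefined)" for h
  have m: "1 \<le> ?m" using a unfolding Aplus_def by (simp add: Suc_leI)
  have s_range: "\<forall>j<?n. s j < ?m" using s unfolding lex_retraction_def by blast
  have a_tuple: "a \<in> tuples t ?m" using a unfolding Aplus_def tuples_def by simp
  have "minor f \<in> C ?m" "minor g \<in> C ?m"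
    using clone_minor_closed[OF clone _ m s_range] fg unfolding minor_def by blast+
  moreover have "p = (minor f a, minor g a)"
    using fg(3) a_tuple reindex_lex_retraction[OF s] unfolding minor_def by simp
  moreover have "minor f x = minor g x" if "x \<in> tuples t ?m" "lex_less x a" for x
    using agree that reindex_in_tuples[OF that(1) s_range] lex_less_reindex[OF s that(2)]
    unfolding minor_def by simp
  ultimately show "p \<in> phi t C a" unfolding phi_def by blast
qed

theorem lemma5p2:
  fixes t :: nat and C :: "nat \<Rightarrow> (nat list \<Rightarrow> nat) set" and c d :: nat
    and a b :: "nat list"
  assumes "is_clone t C"
    and "c \<in> {1..t}" and "d \<in> {1..t}"
    and "a \<in> lam t C (c, d)"
    and "E_le a b"
  shows "b \<in> lam t C (c, d)"
proof -
  have a: "a \<in> Aplus t" and not_a: "(c, d) \<notin> phi t C a"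
    using assms(4) unfolding lam_def by auto
  obtain s where s: "lex_retraction a b s"
    using E_le_lex_retraction[OF assms(5)] by blast
  have "b \<noteq> []" using a s unfolding Aplus_def lex_retraction_def by fastforce
  moreover have "set b \<subseteq> set a"
  proof
    fix v assume "v \<in> set b"
    then obtain j where "j < length b" "v = b ! j" by (auto simp: in_set_conv_nth)
    then show "v \<in> set a" using s nth_mem unfolding lex_retraction_def by metis
  qed
  ultimately have "b \<in> Aplus t" using a unfolding Aplus_def by auto
  moreover have "(c, d) \<notin> phi t C b"
    using phi_lex_retraction_subset[OF assms(1) a s] not_a by blast
  ultimately show ?thesis unfolding lam_def by simp
qed

end
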